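(* Let $F$, $G$, and $H$ be simple graphs. Then \[\hom(F,G\cdot H)=\sum_{\mathcal{R}}\hom(F/\mathcal{R},G)\,\hom\Big(\coprod_{R\in\mathcal{R}}F[R],H\Big),\] where the sum ranges over all partitions $\mathcal{R}$ of $V(F)$ such that $F[R]$ is connected for all $R\in\mathcal{R}$.
   Context: All graphs are finite, undirected, without multiple edges; simple means without loops. $\hom(F,G)$ counts homomorphisms $F\to G$. $G\cdot H$ is the lexicographic product: vertex set $V(G)\times V(H)$, with $(g,h)$ adjacent to $(g',h')$ iff $g=g'$ and $hh'\in E(H)$, or $gg'\in E(G)$. $F[R]$ is the subgraph induced by $R$; $\coprod$ is disjoint union. For a partition $\mathcal{R}$ of $V(F)$, $F/\mathcal{R}$ is the simple graph with vertex set $\mathcal{R}$ and an edge $PQ$ ($P\ne Q$) iff some $p\in P$ and $q\in Q$ are adjacent in $F$. *)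

theory Defs
  imports Main "HOL-Library.FuncSet" "HOL-Library.Disjoint_Sets"
begin

record 'a sgraph =
  verts :: "'a set"
  adj :: "'a \<Rightarrow> 'a \<Rightarrow> bool"

definition simple_graph :: "('a, 'z) sgraph_scheme \<Rightarrow> bool" where
  "simple_graph G \<longleftrightarrow> finite (verts G)
     \<and> (\<forall>x y. adj G x y \<longrightarrow> x \<in> verts G \<and> y \<in> verts G)
     \<and> (\<forall>x y. adj G x y \<longrightarrow> adj G y x)
     \<and> (\<forall>x. \<not> adj G x x)"

definition homs :: "'a sgraph \<Rightarrow> 'b sgraph \<Rightarrow> ('a \<Rightarrow> 'b) set" where
  "homs F G = {f \<in> verts F \<rightarrow>\<^sub>E verts G. \<forall>x y. adj F x y \<longrightarrow> adj G (f x) (f y)}"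

definition hom :: "'a sgraph \<Rightarrow> 'b sgraph \<Rightarrow> nat" where
  "hom F G = card (homs F G)"

definition lex_prod :: "'b sgraph \<Rightarrow> 'c sgraph \<Rightarrow> ('b \<times> 'c) sgraph" where
  "lex_prod G H = \<lparr> verts = verts G \<times> verts H,
     adj = (\<lambda>(g,h) (g',h'). (g,h) \<in> verts G \<times> verts H \<and> (g',h') \<in> verts G \<times> verts H \<and>
              ((g = g' \<and> adj H h h') \<or> adj G g g')) \<rparr>"

definition induced :: "'a sgraph \<Rightarrow> 'a set \<Rightarrow> 'a sgraph" where
  "induced F R = \<lparr> verts = verts F \<inter> R, adj = (\<lambda>x y. adj F x y \<and> x \<in> R \<and> y \<in> R) \<rparr>"

definition coprod :: "'i set \<Rightarrow> ('i \<Rightarrow> 'a sgraph) \<Rightarrow> ('i \<times> 'a) sgraph" where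
  "coprod I Gs = \<lparr> verts = {(i, v). i \<in> I \<and> v \<in> verts (Gs i)},
     adj = (\<lambda>(i,v) (j,w). i \<in> I \<and> i = j \<and> adj (Gs i) v w) \<rparr>"

definition quotient_graph :: "'a sgraph \<Rightarrow> 'a set set \<Rightarrow> 'a set sgraph" where
  "quotient_graph F \<R> = \<lparr> verts = \<R>,
     adj = (\<lambda>P Q. P \<in> \<R> \<and> Q \<in> \<R> \<and> P \<noteq> Q \<and> (\<exists>p\<in>P. \<exists>q\<in>Q. adj F p q)) \<rparr>"

definition connected_graph :: "'a sgraph \<Rightarrow> bool" where
  "connected_graph G \<longleftrightarrow> verts G \<noteq> {} \<and>
     (\<forall>x\<in>verts G. \<forall>y\<in>verts G. (adj G)\<^sup>*\<^sup>* x y)"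

end

theory Submission
  imports Defs
begin

text \<open>A homomorphism \<open>f : F \<rightarrow> G \<cdot> H\<close> sends each edge of \<open>F\<close> either to an edge of \<open>G\<close> in the
  first coordinate or into a single copy of \<open>H\<close>. The edges of the second kind cut \<open>V(F)\<close> into
  the connected blocks of a partition \<open>\<R>\<close>, and \<open>f\<close> splits into a homomorphism \<open>F/\<R> \<rightarrow> G\<close>
  (the common first coordinate of each block) and a homomorphism \<open>\<coprod>\<^sub>R F[R] \<rightarrow> H\<close> (the second
  coordinates). Conversely, gluing such a pair gives a homomorphism whose blocks are exactly \<open>\<R>\<close>:
  connectivity keeps each block together, and since \<open>G\<close> has no loops an edge between blocks
  changes the first coordinate. Counting pairs partition by partition gives the formula.\<close>

definition block_of :: "'a set set \<Rightarrow> 'a \<Rightarrow> 'a set" where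
  "block_of \<R> v = (THE P. P \<in> \<R> \<and> v \<in> P)"

lemma block_of_eq:
  assumes "partition_on A \<R>" "P \<in> \<R>" "v \<in> P"
  shows "block_of \<R> v = P"
  unfolding block_of_def
proof (rule the_equality)
  show "P \<in> \<R> \<and> v \<in> P"
    using assms(2,3) ..
  show "Q = P" if "Q \<in> \<R> \<and> v \<in> Q" for Q
    using disjointD[OF partition_onD2[OF assms(1)], of Q P] that assms(2,3) by blast
qed

lemma block_of_mem:
  assumes "partition_on A \<R>" "v \<in> A"
  shows "block_of \<R> v \<in> \<R>" and "v \<in> block_of \<R> v"
proof -
  obtain P where "P \<in> \<R>" "v \<in> P"
    using partition_onD1[OF assms(1)] assms(2) by blast
  then show "block_of \<R> v \<in> \<R>" and "v \<in> block_of \<R> v"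
    using block_of_eq[OF assms(1)] by simp_all
qed

definition components :: "'a set \<Rightarrow> ('a \<Rightarrow> 'a \<Rightarrow> bool) \<Rightarrow> 'a set set" where
  "components A E = (\<lambda>v. {w. E\<^sup>*\<^sup>* v w}) ` A"

lemma component_eq:
  assumes "symp E" "C \<in> components A E" "x \<in> C"
  shows "C = {y. E\<^sup>*\<^sup>* x y}"
proof -
  obtain v where "C = {w. E\<^sup>*\<^sup>* v w}"
    using assms(2) by (auto simp: components_def)
  moreover have "E\<^sup>*\<^sup>* x v"
    using assms(3) calculation sympD[OF symp_rtranclp[OF assms(1)]] by blast
  ultimately show ?thesis
    using assms(3) by (auto intro: rtranclp_trans)
qed

lemma partition_on_components:
  assumes "symp E" and edges: "\<And>x y. E x y \<Longrightarrow> x \<in> A \<and> y \<in> A"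
  shows "partition_on A (components A E)"
proof (rule partition_onI)
  have "w \<in> A" if "E\<^sup>*\<^sup>* v w" "v \<in> A" for v w
    using that by (induction rule: rtranclp_induct) (auto dest: edges)
  then show "\<Union> (components A E) = A"
    by (auto simp: components_def)
  show "{} \<notin> components A E"
    by (auto simp: components_def)
next
  fix P Q assume "P \<in> components A E" "Q \<in> components A E" "P \<noteq> Q"
  then show "disjnt P Q"
    using component_eq[OF assms(1)] by (metis disjnt_iff)
qed

lemma connected_graph_induced_component:
  assumes "symp E" and "\<And>x y. E x y \<Longrightarrow> x \<in> verts F \<and> y \<in> verts F"
    and sub: "\<And>x y. E x y \<Longrightarrow> adj F x y"
    and C: "C \<in> components (verts F) E"
  shows "connected_graph (induced F C)"
proof -
  have "C \<subseteq> verts F"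
    using partition_on_components[OF assms(1,2)] C partition_onD1 by blast
  moreover have "C \<noteq> {}"
    using partition_on_components[OF assms(1,2)] C partition_onD3 by blast
  moreover have "y \<in> C \<and> (adj (induced F C))\<^sup>*\<^sup>* x y" if "E\<^sup>*\<^sup>* x y" "x \<in> C" for x y
    using that
  proof (induction rule: rtranclp_induct)
    case (step y z)
    then have "y \<in> C" "(adj (induced F C))\<^sup>*\<^sup>* x y"
      by auto
    moreover have "z \<in> C"
      using component_eq[OF assms(1) C \<open>y \<in> C\<close>] step.hyps(2) by auto
    ultimately show ?case
      using sub[OF step.hyps(2)] by (auto simp: induced_def intro: rtranclp.rtrancl_into_rtrancl)
  qed simp
  ultimately show ?thesis
    using component_eq[OF assms(1) C] by (auto simp: connected_graph_def induced_def)
qed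

lemma components_eqI:
  assumes R: "partition_on A \<R>"
    and within: "\<And>x y. E x y \<Longrightarrow> \<exists>P\<in>\<R>. x \<in> P \<and> y \<in> P"
    and linked: "\<And>P x y. P \<in> \<R> \<Longrightarrow> x \<in> P \<Longrightarrow> y \<in> P \<Longrightarrow> E\<^sup>*\<^sup>* x y"
  shows "components A E = \<R>"
proof -
  have "{w. E\<^sup>*\<^sup>* v w} = block_of \<R> v" if v: "v \<in> A" for v
  proof (intro equalityI subsetI; simp)
    fix w assume "E\<^sup>*\<^sup>* v w"
    then show "w \<in> block_of \<R> v"
    proof (induction rule: rtranclp_induct)
      case base
      show ?case using block_of_mem(2)[OF R v] .
    next
      case (step y z)
      then obtain P where "P \<in> \<R>" "y \<in> P" "z \<in> P"
        using within by blast
      then show ?case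
        using step.IH block_of_eq[OF R] block_of_mem(1)[OF R v] by metis
    qed
  next
    fix w assume "w \<in> block_of \<R> v"
    then show "E\<^sup>*\<^sup>* v w"
      using linked block_of_mem[OF R v] by blast
  qed
  then have "components A E = block_of \<R> ` A"
    by (simp add: components_def)
  also have "\<dots> = \<R>"
  proof
    show "block_of \<R> ` A \<subseteq> \<R>"
      using block_of_mem(1)[OF R] by blast
    show "\<R> \<subseteq> block_of \<R> ` A"
    proof
      fix P assume P: "P \<in> \<R>"
      then obtain v where "v \<in> P"
        using partition_onD3[OF R] by fastforce
      then show "P \<in> block_of \<R> ` A"
        using P block_of_eq[OF R P] partition_onD1[OF R] by blast
    qed
  qed
  finally show ?thesis .
qed

lemma adj_lex_prod_iff:
  "adj (lex_prod G H) p q \<longleftrightarrow> p \<in> verts G \<times> verts H \<and> q \<in> verts G \<times> verts H \<and>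
     (fst p = fst q \<and> adj H (snd p) (snd q) \<or> adj G (fst p) (fst q))"
  by (cases p; cases q) (simp add: lex_prod_def)

lemma simple_graph_adjD:
  assumes "simple_graph F" "adj F x y"
  shows "x \<in> verts F" "y \<in> verts F" "adj F y x"
  using assms unfolding simple_graph_def by blast+

lemma homs_vertsD: "f \<in> homs F G \<Longrightarrow> x \<in> verts F \<Longrightarrow> f x \<in> verts G"
  by (auto simp: homs_def)

lemma homs_adjD: "f \<in> homs F G \<Longrightarrow> adj F x y \<Longrightarrow> adj G (f x) (f y)"
  by (auto simp: homs_def)

lemma homs_extensional: "f \<in> homs F G \<Longrightarrow> f \<in> extensional (verts F)"
  by (auto simp: homs_def PiE_iff)

lemma finite_homs:
  assumes "finite (verts F)" "finite (verts G)"
  shows "finite (homs F G)"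
proof (rule finite_subset)
  show "homs F G \<subseteq> verts F \<rightarrow>\<^sub>E verts G"
    by (auto simp: homs_def)
qed (simp add: finite_PiE assms)

definition connected_partitions :: "'a sgraph \<Rightarrow> 'a set set set" where
  "connected_partitions F =
     {\<R>. partition_on (verts F) \<R> \<and> (\<forall>R\<in>\<R>. connected_graph (induced F R))}"

definition fibre_adj :: "'a sgraph \<Rightarrow> ('a \<Rightarrow> 'b \<times> 'c) \<Rightarrow> 'a \<Rightarrow> 'a \<Rightarrow> bool" where
  "fibre_adj F f x y \<longleftrightarrow> adj F x y \<and> fst (f x) = fst (f y)"

definition fibre_partition :: "'a sgraph \<Rightarrow> ('a \<Rightarrow> 'b \<times> 'c) \<Rightarrow> 'a set set" where
  "fibre_partition F f = components (verts F) (fibre_adj F f)"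

lemma symp_fibre_adj: "simple_graph F \<Longrightarrow> symp (fibre_adj F f)"
  using simple_graph_adjD by (fastforce simp: fibre_adj_def intro: sympI)

lemma fibre_partition_connected:
  assumes "simple_graph F"
  shows "fibre_partition F f \<in> connected_partitions F"
proof -
  have "fibre_adj F f x y \<Longrightarrow> x \<in> verts F \<and> y \<in> verts F" for x y
    using simple_graph_adjD[OF assms] by (auto simp: fibre_adj_def)
  moreover have "fibre_adj F f x y \<Longrightarrow> adj F x y" for x y
    by (simp add: fibre_adj_def)
  ultimately show ?thesis
    unfolding connected_partitions_def fibre_partition_def
    using partition_on_components connected_graph_induced_component symp_fibre_adj[OF assms]
    by blast
qed

lemma partition_on_fibre_partition:
  "simple_graph F \<Longrightarrow> partition_on (verts F) (fibre_partition F f)"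
  using fibre_partition_connected by (auto simp: connected_partitions_def)

lemma fst_eq_on_fibre_partition:
  assumes "simple_graph F" "P \<in> fibre_partition F f" "x \<in> P" "y \<in> P"
  shows "fst (f x) = fst (f y)"
proof -
  have "(fibre_adj F f)\<^sup>*\<^sup>* x y"
    using component_eq[OF symp_fibre_adj[OF assms(1)]] assms(2-4) by (auto simp: fibre_partition_def)
  then show ?thesis
    by (induction rule: rtranclp_induct) (auto simp: fibre_adj_def)
qed

definition quotient_factor :: "'a sgraph \<Rightarrow> ('a \<Rightarrow> 'b \<times> 'c) \<Rightarrow> 'a set \<Rightarrow> 'b" where
  "quotient_factor F f = restrict (\<lambda>P. fst (f (SOME v. v \<in> P))) (fibre_partition F f)"

definition fibre_factor :: "'a sgraph \<Rightarrow> ('a \<Rightarrow> 'b \<times> 'c) \<Rightarrow> 'a set \<times> 'a \<Rightarrow> 'c" where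
  "fibre_factor F f =
     restrict (\<lambda>(P, v). snd (f v)) (verts (coprod (fibre_partition F f) (induced F)))"

definition glue_hom ::
    "'a sgraph \<Rightarrow> 'a set set \<Rightarrow> ('a set \<Rightarrow> 'b) \<Rightarrow> ('a set \<times> 'a \<Rightarrow> 'c) \<Rightarrow> 'a \<Rightarrow> 'b \<times> 'c" where
  "glue_hom F \<R> \<phi> \<psi> = restrict (\<lambda>v. (\<phi> (block_of \<R> v), \<psi> (block_of \<R> v, v))) (verts F)"

lemma quotient_factor_eq:
  assumes "simple_graph F" "P \<in> fibre_partition F f" "v \<in> P"
  shows "quotient_factor F f P = fst (f v)"
  using fst_eq_on_fibre_partition[OF assms(1,2) someI[of "\<lambda>v. v \<in> P"] assms(3)] assms
  by (simp add: quotient_factor_def)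

lemma quotient_factor_hom:
  assumes F: "simple_graph F" and f: "f \<in> homs F (lex_prod G H)"
  shows "quotient_factor F f \<in> homs (quotient_graph F (fibre_partition F f)) G"
proof -
  let ?\<R> = "fibre_partition F f"
  have part: "partition_on (verts F) ?\<R>"
    using partition_on_fibre_partition[OF F] .
  have "quotient_factor F f P \<in> verts G" if P: "P \<in> ?\<R>" for P
  proof -
    obtain v where v: "v \<in> P"
      using partition_onD3[OF part] P by fastforce
    then have "v \<in> verts F"
      using partition_onD1[OF part] P by blast
    then show ?thesis
      using quotient_factor_eq[OF F P v] homs_vertsD[OF f] by (force simp: lex_prod_def)
  qed
  moreover have "adj G (quotient_factor F f P) (quotient_factor F f Q)"
    if "adj (quotient_graph F ?\<R>) P Q" for P Q
  proof -
    have "P \<in> ?\<R>" "Q \<in> ?\<R>" "P \<noteq> Q" "\<exists>p\<in>P. \<exists>q\<in>Q. adj F p q"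
      using that by (simp_all add: quotient_graph_def)
    then obtain p q where pq: "P \<in> ?\<R>" "Q \<in> ?\<R>" "P \<noteq> Q" "p \<in> P" "q \<in> Q" "adj F p q"
      by blast
    have "fst (f p) \<noteq> fst (f q)"
    proof
      assume "fst (f p) = fst (f q)"
      then have "fibre_adj F f p q"
        using pq(6) by (simp add: fibre_adj_def)
      then have "q \<in> P"
        using component_eq[OF symp_fibre_adj[OF F] pq(1)[unfolded fibre_partition_def] pq(4)]
        by auto
      then show False
        using pq partition_onD2[OF part] by (auto simp: disjoint_def)
    qed
    then have "adj G (fst (f p)) (fst (f q))"
      using homs_adjD[OF f pq(6)] by (auto simp: adj_lex_prod_iff)
    then show ?thesis
      using quotient_factor_eq[OF F pq(1,4)] quotient_factor_eq[OF F pq(2,5)] by simp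
  qed
  moreover have "quotient_factor F f \<in> extensional ?\<R>"
    by (simp add: quotient_factor_def)
  ultimately show ?thesis
    unfolding homs_def PiE_iff by (simp add: quotient_graph_def)
qed

lemma fibre_factor_hom:
  assumes F: "simple_graph F" and G: "\<And>x. \<not> adj G x x" and f: "f \<in> homs F (lex_prod G H)"
  shows "fibre_factor F f \<in> homs (coprod (fibre_partition F f) (induced F)) H"
proof -
  let ?\<R> = "fibre_partition F f"
  have "fibre_factor F f x \<in> verts H" if "x \<in> verts (coprod ?\<R> (induced F))" for x
    using that homs_vertsD[OF f] by (force simp: fibre_factor_def coprod_def induced_def lex_prod_def)
  moreover have "adj H (fibre_factor F f x) (fibre_factor F f y)"
    if "adj (coprod ?\<R> (induced F)) x y" for x y
  proof -
    obtain P v Q w where xy: "x = (P, v)" "y = (Q, w)"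
      by (cases x; cases y)
    with that have x: "Q = P" "P \<in> ?\<R>" "v \<in> P" "w \<in> P" "adj F v w"
      by (auto simp: coprod_def induced_def)
    have "fst (f v) = fst (f w)"
      using fst_eq_on_fibre_partition[OF F x(2,3,4)] .
    then have "adj H (snd (f v)) (snd (f w))"
      using homs_adjD[OF f x(5)] G by (auto simp: adj_lex_prod_iff)
    then show ?thesis
      using xy x simple_graph_adjD[OF F x(5)] by (simp add: fibre_factor_def coprod_def induced_def)
  qed
  moreover have "fibre_factor F f \<in> extensional (verts (coprod ?\<R> (induced F)))"
    by (simp add: fibre_factor_def)
  ultimately show ?thesis
    unfolding homs_def PiE_iff by blast
qed

lemma glue_hom_split:
  assumes F: "simple_graph F" and f: "f \<in> homs F (lex_prod G H)"
  shows "glue_hom F (fibre_partition F f) (quotient_factor F f) (fibre_factor F f) = f"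
proof (rule extensionalityI)
  show "glue_hom F (fibre_partition F f) (quotient_factor F f) (fibre_factor F f) \<in> extensional (verts F)"
    by (simp add: glue_hom_def)
  show "f \<in> extensional (verts F)"
    using homs_extensional[OF f] .
  fix v assume v: "v \<in> verts F"
  let ?P = "block_of (fibre_partition F f) v"
  have P: "?P \<in> fibre_partition F f" "v \<in> ?P"
    using block_of_mem[OF partition_on_fibre_partition[OF F] v] by auto
  then show "glue_hom F (fibre_partition F f) (quotient_factor F f) (fibre_factor F f) v = f v"
    using quotient_factor_eq[OF F P] v
    by (simp add: glue_hom_def fibre_factor_def coprod_def induced_def)
qed

lemma glue_hom_mem:
  assumes F: "simple_graph F" and \<R>: "partition_on (verts F) \<R>"
    and \<phi>: "\<phi> \<in> homs (quotient_graph F \<R>) G" and \<psi>: "\<psi> \<in> homs (coprod \<R> (induced F)) H"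
  shows "glue_hom F \<R> \<phi> \<psi> \<in> homs F (lex_prod G H)"
proof -
  let ?g = "glue_hom F \<R> \<phi> \<psi>"
  have g: "?g v = (\<phi> (block_of \<R> v), \<psi> (block_of \<R> v, v))" if "v \<in> verts F" for v
    using that by (simp add: glue_hom_def)
  have vert: "?g v \<in> verts G \<times> verts H" if v: "v \<in> verts F" for v
  proof -
    have "block_of \<R> v \<in> verts (quotient_graph F \<R>)"
      using block_of_mem[OF \<R> v] by (simp add: quotient_graph_def)
    moreover have "(block_of \<R> v, v) \<in> verts (coprod \<R> (induced F))"
      using block_of_mem[OF \<R> v] v by (simp add: coprod_def induced_def)
    ultimately show ?thesis
      using homs_vertsD[OF \<phi>] homs_vertsD[OF \<psi>] g[OF v] by simp
  qed
  have "adj (lex_prod G H) (?g u) (?g v)" if uv: "adj F u v" for u v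
  proof -
    have u: "u \<in> verts F" and v: "v \<in> verts F"
      using simple_graph_adjD[OF F uv] by auto
    note blocks = block_of_mem[OF \<R> u] block_of_mem[OF \<R> v]
    show ?thesis
    proof (cases "block_of \<R> u = block_of \<R> v")
      case True
      then have "adj (coprod \<R> (induced F)) (block_of \<R> u, u) (block_of \<R> v, v)"
        using blocks uv by (simp add: coprod_def induced_def)
      then show ?thesis
        using homs_adjD[OF \<psi>] vert[OF u] vert[OF v] g[OF u] g[OF v] True
        unfolding adj_lex_prod_iff by simp
    next
      case False
      then have "adj (quotient_graph F \<R>) (block_of \<R> u) (block_of \<R> v)"
        using blocks uv by (auto simp: quotient_graph_def)
      then show ?thesis
        using homs_adjD[OF \<phi>] vert[OF u] vert[OF v] g[OF u] g[OF v]
        unfolding adj_lex_prod_iff by simp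
    qed
  qed
  moreover have "?g \<in> extensional (verts F)"
    by (simp add: glue_hom_def)
  ultimately show ?thesis
    using vert unfolding homs_def PiE_iff by (simp add: lex_prod_def)
qed

lemma fibre_adj_glue_hom_same_block:
  assumes F: "simple_graph F" and G: "\<And>x. \<not> adj G x x" and part: "partition_on (verts F) \<R>"
    and \<phi>: "\<phi> \<in> homs (quotient_graph F \<R>) G" and xy: "fibre_adj F (glue_hom F \<R> \<phi> \<psi>) x y"
  shows "block_of \<R> x = block_of \<R> y"
proof (rule ccontr)
  assume ne: "block_of \<R> x \<noteq> block_of \<R> y"
  have "adj F x y" and x: "x \<in> verts F" and y: "y \<in> verts F"
    using xy simple_graph_adjD[OF F] by (auto simp: fibre_adj_def)
  moreover have eq: "\<phi> (block_of \<R> x) = \<phi> (block_of \<R> y)"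
    using xy x y by (simp add: fibre_adj_def glue_hom_def)
  ultimately have "adj (quotient_graph F \<R>) (block_of \<R> x) (block_of \<R> y)"
    using ne block_of_mem[OF part x] block_of_mem[OF part y]
    unfolding quotient_graph_def by auto
  then have "adj G (\<phi> (block_of \<R> y)) (\<phi> (block_of \<R> y))"
    using homs_adjD[OF \<phi>] eq by metis
  then show False
    using G by blast
qed

lemma fibre_partition_glue_hom:
  assumes F: "simple_graph F" and G: "\<And>x. \<not> adj G x x" and \<R>: "\<R> \<in> connected_partitions F"
    and \<phi>: "\<phi> \<in> homs (quotient_graph F \<R>) G"
  shows "fibre_partition F (glue_hom F \<R> \<phi> \<psi>) = \<R>"
  unfolding fibre_partition_def
proof (rule components_eqI)
  let ?g = "glue_hom F \<R> \<phi> \<psi>"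
  show part: "partition_on (verts F) \<R>"
    using \<R> by (simp add: connected_partitions_def)
  show "\<exists>P\<in>\<R>. x \<in> P \<and> y \<in> P" if xy: "fibre_adj F ?g x y" for x y
  proof -
    have "x \<in> verts F" "y \<in> verts F"
      using xy simple_graph_adjD[OF F] by (auto simp: fibre_adj_def)
    then show ?thesis
      using fibre_adj_glue_hom_same_block[OF F G part \<phi> xy] block_of_mem[OF part] by metis
  qed
  show "(fibre_adj F ?g)\<^sup>*\<^sup>* x y" if P: "P \<in> \<R>" and xy: "x \<in> P" "y \<in> P" for P x y
  proof -
    have P_verts: "P \<subseteq> verts F"
      using partition_onD1[OF part] P by blast
    have "connected_graph (induced F P)"
      using \<R> P by (simp add: connected_partitions_def)
    then have path: "(adj (induced F P))\<^sup>*\<^sup>* x y"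
      using xy P_verts unfolding connected_graph_def by (auto simp: induced_def)
    have "adj (induced F P) \<le> fibre_adj F ?g"
    proof (intro predicate2I)
      fix u w assume "adj (induced F P) u w"
      then have "adj F u w" "u \<in> P" "w \<in> P"
        by (auto simp: induced_def)
      moreover have "u \<in> verts F" "w \<in> verts F"
        using P_verts calculation(2,3) by auto
      ultimately show "fibre_adj F ?g u w"
        using block_of_eq[OF part P] by (simp add: fibre_adj_def glue_hom_def)
    qed
    from predicate2D[OF rtranclp_mono[OF this] path] show ?thesis .
  qed
qed

lemma split_glue_hom:
  assumes F: "simple_graph F" and G: "\<And>x. \<not> adj G x x" and \<R>: "\<R> \<in> connected_partitions F"
    and \<phi>: "\<phi> \<in> homs (quotient_graph F \<R>) G" and \<psi>: "\<psi> \<in> homs (coprod \<R> (induced F)) H"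
  defines "g \<equiv> glue_hom F \<R> \<phi> \<psi>"
  shows "fibre_partition F g = \<R>" and "quotient_factor F g = \<phi>" and "fibre_factor F g = \<psi>"
proof -
  show parts: "fibre_partition F g = \<R>"
    unfolding g_def using fibre_partition_glue_hom[OF F G \<R> \<phi>] .
  have part: "partition_on (verts F) \<R>"
    using \<R> by (simp add: connected_partitions_def)
  have g: "g v = (\<phi> (block_of \<R> v), \<psi> (block_of \<R> v, v))" if "v \<in> verts F" for v
    using that by (simp add: g_def glue_hom_def)
  show "quotient_factor F g = \<phi>"
  proof (rule extensionalityI)
    show "quotient_factor F g \<in> extensional \<R>"
      by (simp add: quotient_factor_def parts)
    show "\<phi> \<in> extensional \<R>"
      using homs_extensional[OF \<phi>] by (simp add: quotient_graph_def)
    fix P assume P: "P \<in> \<R>"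
    then obtain v where v: "v \<in> P"
      using partition_onD3[OF part] by fastforce
    then have "v \<in> verts F"
      using partition_onD1[OF part] P by blast
    then show "quotient_factor F g P = \<phi> P"
      using quotient_factor_eq[OF F, of P g v] parts P v block_of_eq[OF part P v] g
      by simp
  qed
  show "fibre_factor F g = \<psi>"
  proof (rule extensionalityI)
    show "fibre_factor F g \<in> extensional (verts (coprod \<R> (induced F)))"
      by (simp add: fibre_factor_def parts)
    show "\<psi> \<in> extensional (verts (coprod \<R> (induced F)))"
      using homs_extensional[OF \<psi>] .
    fix x assume "x \<in> verts (coprod \<R> (induced F))"
    then obtain P v where "x = (P, v)" "P \<in> \<R>" "v \<in> P" "v \<in> verts F"
      by (auto simp: coprod_def induced_def)
    then show "fibre_factor F g x = \<psi> x"
      using block_of_eq[OF part] g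
      by (simp add: fibre_factor_def parts coprod_def induced_def)
  qed
qed

definition factorisations :: "'a sgraph \<Rightarrow> 'b sgraph \<Rightarrow> 'c sgraph \<Rightarrow>
    ('a set set \<times> ('a set \<Rightarrow> 'b) \<times> ('a set \<times> 'a \<Rightarrow> 'c)) set" where
  "factorisations F G H = (SIGMA \<R>:connected_partitions F.
     homs (quotient_graph F \<R>) G \<times> homs (coprod \<R> (induced F)) H)"

definition split_hom ::
    "'a sgraph \<Rightarrow> ('a \<Rightarrow> 'b \<times> 'c) \<Rightarrow> 'a set set \<times> ('a set \<Rightarrow> 'b) \<times> ('a set \<times> 'a \<Rightarrow> 'c)" where
  "split_hom F f = (fibre_partition F f, quotient_factor F f, fibre_factor F f)"

lemma bij_betw_glue_hom:
  assumes F: "simple_graph F" and G: "\<And>x. \<not> adj G x x"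
  shows "bij_betw (\<lambda>(\<R>, \<phi>, \<psi>). glue_hom F \<R> \<phi> \<psi>) (factorisations F G H) (homs F (lex_prod G H))"
proof (rule bij_betw_byWitness[where f' = "split_hom F"])
  show "\<forall>x\<in>factorisations F G H. split_hom F ((\<lambda>(\<R>, \<phi>, \<psi>). glue_hom F \<R> \<phi> \<psi>) x) = x"
  proof
    fix x assume "x \<in> factorisations F G H"
    then obtain \<R> \<phi> \<psi> where x: "x = (\<R>, \<phi>, \<psi>)" and \<R>: "\<R> \<in> connected_partitions F"
      and \<phi>: "\<phi> \<in> homs (quotient_graph F \<R>) G" and \<psi>: "\<psi> \<in> homs (coprod \<R> (induced F)) H"
      by (auto simp: factorisations_def)
    then show "split_hom F ((\<lambda>(\<R>, \<phi>, \<psi>). glue_hom F \<R> \<phi> \<psi>) x) = x"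
      using split_glue_hom[OF F G \<R> \<phi> \<psi>] by (simp add: split_hom_def)
  qed
  show "\<forall>f\<in>homs F (lex_prod G H). (\<lambda>(\<R>, \<phi>, \<psi>). glue_hom F \<R> \<phi> \<psi>) (split_hom F f) = f"
    using glue_hom_split[OF F, of _ G H] by (simp add: split_hom_def)
  show "(\<lambda>(\<R>, \<phi>, \<psi>). glue_hom F \<R> \<phi> \<psi>) ` factorisations F G H \<subseteq> homs F (lex_prod G H)"
    using glue_hom_mem[OF F] by (auto simp: factorisations_def connected_partitions_def)
  show "split_hom F ` homs F (lex_prod G H) \<subseteq> factorisations F G H"
    using fibre_partition_connected[OF F] quotient_factor_hom[OF F] fibre_factor_hom[OF F G]
    by (auto simp: factorisations_def split_hom_def)
qed

lemma card_factorisations: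
  assumes "finite (verts F)" "finite (verts G)" "finite (verts H)"
  shows "card (factorisations F G H) =
    (\<Sum>\<R>\<in>connected_partitions F. hom (quotient_graph F \<R>) G * hom (coprod \<R> (induced F)) H)"
proof -
  have "finite (connected_partitions F)"
    using finitely_many_partition_on[OF assms(1)]
    by (rule finite_subset[rotated]) (auto simp: connected_partitions_def)
  moreover have "finite (homs (quotient_graph F \<R>) G \<times> homs (coprod \<R> (induced F)) H)"
    if "\<R> \<in> connected_partitions F" for \<R>
  proof -
    have "finite \<R>"
      using finite_elements[OF assms(1)] that by (simp add: connected_partitions_def)
    have "verts (coprod \<R> (induced F)) \<subseteq> \<R> \<times> verts F"
      by (auto simp: coprod_def induced_def)
    then have "finite (verts (coprod \<R> (induced F)))"
      using \<open>finite \<R>\<close> assms(1) finite_subset by blast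
    then show ?thesis
      using \<open>finite \<R>\<close> assms(2,3) by (simp add: finite_homs quotient_graph_def)
  qed
  ultimately show ?thesis
    by (simp add: factorisations_def hom_def card_cartesian_product)
qed

theorem theorem16:
  fixes F :: "'a sgraph" and G :: "'b sgraph" and H :: "'c sgraph"
  assumes "simple_graph F" and "simple_graph G" and "simple_graph H"
  shows "hom F (lex_prod G H) =
    (\<Sum>\<R> \<in> {\<R>. partition_on (verts F) \<R> \<and> (\<forall>R\<in>\<R>. connected_graph (induced F R))}.
        hom (quotient_graph F \<R>) G * hom (coprod \<R> (\<lambda>R. induced F R)) H)"
proof -
  have "\<And>x. \<not> adj G x x"
    using assms(2) by (simp add: simple_graph_def)
  then have "hom F (lex_prod G H) = card (factorisations F G H)"
    unfolding hom_def using bij_betw_same_card[OF bij_betw_glue_hom[OF assms(1)]] by metis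
  also have "\<dots> = (\<Sum>\<R>\<in>connected_partitions F. hom (quotient_graph F \<R>) G * hom (coprod \<R> (induced F)) H)"
    using assms by (intro card_factorisations) (simp_all add: simple_graph_def)
  finally show ?thesis
    by (simp add: connected_partitions_def)
qed

end
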